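(* Let $l\in\mathbb{Z}_{\ge1}$ and let $X=X(\mathbb{Z}_{2l},\{\pm a,\pm b\})$ be a $4$-regular circulant graph. If $X$ admits perfect state transfer, then $\frac{\zeta_{2l}^a+\zeta_{2l}^{-a}+\zeta_{2l}^b+\zeta_{2l}^{-b}}{2}$ is an algebraic integer, where $\zeta_{2l}=e^{\frac{2\pi}{2l}i}$.
   Context: $X(\mathbb{Z}_n,S)$ (with $S\subseteq\mathbb{Z}_n\setminus\{0\}$, $S=-S$) has vertex set $\mathbb{Z}_n$ and edges $\{x,y\}$ with $y-x\in S$. For a graph with symmetric arc set $\mathcal{A}$ ($t((x,y))=y$, $(x,y)^{-1}=(y,x)$): boundary matrix $d_{x,a}=\frac{1}{\sqrt{\deg x}}\delta_{x,t(a)}$, shift matrix $R_{a,b}=\delta_{a,b^{-1}}$, $U=R(2d^*d-I_{\mathcal{A}})$. A graph admits perfect state transfer if there are distinct vertices $x,y$, $\tau\in\mathbb{Z}_{\ge1}$ and $|\gamma|=1$ with $U^\tau d^*e_x=\gamma d^*e_y$ ($e_x$ the standard unit vector). *)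

theory Defs
  imports Complex_Main "HOL-Computational_Algebra.Polynomial"
begin

text \<open>A (simple, undirected) graph is given by a finite vertex set V and a symmetric
adjacency relation adj. Vectors indexed by vertices / arcs are functions to complex.\<close>

definition arcs :: "'v set \<Rightarrow> ('v \<Rightarrow> 'v \<Rightarrow> bool) \<Rightarrow> ('v \<times> 'v) set" where
  "arcs V adj = {(x, y). x \<in> V \<and> y \<in> V \<and> adj x y}"

definition gdeg :: "'v set \<Rightarrow> ('v \<Rightarrow> 'v \<Rightarrow> bool) \<Rightarrow> 'v \<Rightarrow> nat" where
  "gdeg V adj x = card {y \<in> V. adj x y}"

definition bdry :: "'v set \<Rightarrow> ('v \<Rightarrow> 'v \<Rightarrow> bool) \<Rightarrow> 'v \<Rightarrow> 'v \<times> 'v \<Rightarrow> complex" where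
  "bdry V adj x a = (if x = snd a then complex_of_real (1 / sqrt (real (gdeg V adj x))) else 0)"

definition d_mult :: "'v set \<Rightarrow> ('v \<Rightarrow> 'v \<Rightarrow> bool) \<Rightarrow> ('v \<times> 'v \<Rightarrow> complex) \<Rightarrow> 'v \<Rightarrow> complex" where
  "d_mult V adj f x = (\<Sum>a\<in>arcs V adj. bdry V adj x a * f a)"

definition dstar_mult :: "'v set \<Rightarrow> ('v \<Rightarrow> 'v \<Rightarrow> bool) \<Rightarrow> ('v \<Rightarrow> complex) \<Rightarrow> 'v \<times> 'v \<Rightarrow> complex" where
  "dstar_mult V adj g a = (\<Sum>x\<in>V. cnj (bdry V adj x a) * g x)"

definition shift_mult :: "'v set \<Rightarrow> ('v \<Rightarrow> 'v \<Rightarrow> bool) \<Rightarrow> ('v \<times> 'v \<Rightarrow> complex) \<Rightarrow> 'v \<times> 'v \<Rightarrow> complex" where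
  "shift_mult V adj f a = (\<Sum>b\<in>arcs V adj. (if a = (snd b, fst b) then 1 else 0) * f b)"

definition walk_U :: "'v set \<Rightarrow> ('v \<Rightarrow> 'v \<Rightarrow> bool) \<Rightarrow> ('v \<times> 'v \<Rightarrow> complex) \<Rightarrow> 'v \<times> 'v \<Rightarrow> complex" where
  "walk_U V adj f = shift_mult V adj (\<lambda>a. 2 * dstar_mult V adj (d_mult V adj f) a - f a)"

definition unit_vec :: "'v \<Rightarrow> 'v \<Rightarrow> complex" where
  "unit_vec x = (\<lambda>y. if y = x then 1 else 0)"

text \<open>Perfect state transfer; vectors on arcs are compared on the arc set.\<close>
definition has_PST :: "'v set \<Rightarrow> ('v \<Rightarrow> 'v \<Rightarrow> bool) \<Rightarrow> bool" where
  "has_PST V adj \<longleftrightarrow> (\<exists>x\<in>V. \<exists>y\<in>V. \<exists>(\<tau>::nat) (\<gamma>::complex). x \<noteq> y \<and> \<tau> \<ge> 1 \<and> norm \<gamma> = 1 \<and>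
     (\<forall>a\<in>arcs V adj. (walk_U V adj ^^ \<tau>) (dstar_mult V adj (unit_vec x)) a
                      = \<gamma> * dstar_mult V adj (unit_vec y) a))"

text \<open>Circulant graph X(Z_n, S): vertices 0..n-1 (representatives of Z_n),
 x ~ y iff (y - x) mod n \<in> S, where S is a set of residues in {0..n-1}.\<close>
definition circ_V :: "nat \<Rightarrow> int set" where
  "circ_V n = {0..<int n}"

definition circ_adj :: "nat \<Rightarrow> int set \<Rightarrow> int \<Rightarrow> int \<Rightarrow> bool" where
  "circ_adj n S x y \<longleftrightarrow> (y - x) mod int n \<in> S"

end

theory Submission
  imports Defs
begin

(*
  Pair a vector on arcs with the character u |-> zeta^u of Z_n, once at the head and once at
  the tail of each arc.  For a circulant graph with symmetric connection set S of size k, these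
  two numbers evolve under the Grover walk U by the Chebyshev recurrence with parameter
  cos theta = sigma / k, where sigma = sum_{s in S} zeta^s is real because S = -S.  Hence the head
  pairing of U^t d^* e_x is sqrt k * zeta^x * cos (t theta), and perfect state transfer at time
  tau forces |cos (tau theta)| = 1.  So e^(i theta) is a root of unity, and
  2 sigma / k = e^(i theta) + e^(-i theta) is an algebraic integer, being a root of D_m - 2 for
  the monic integer Dickson polynomial with D_m (w + 1/w) = w^m + w^-m.
*)

fun dickson :: "nat \<Rightarrow> 'a::comm_ring_1 poly" where
  "dickson 0 = [:2:]"
| "dickson (Suc 0) = [:0, 1:]"
| "dickson (Suc (Suc m)) = pCons 0 (dickson (Suc m)) - dickson m"

lemma coeff_dickson_Ints: "coeff (dickson m) i \<in> \<int>"
  by (induction m arbitrary: i rule: dickson.induct) (auto simp: coeff_pCons split: nat.split)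

lemma degree_dickson_le: "degree (dickson m) \<le> m"
  by (induction m rule: dickson.induct) (auto intro: degree_diff_le order.trans)

lemma coeff_dickson_self: "m > 0 \<Longrightarrow> coeff (dickson m) m = 1"
proof (induction m rule: dickson.induct)
  case (3 m)
  have "degree (dickson m :: 'a poly) < Suc (Suc m)"
    using degree_dickson_le[of m, where 'a='a] by linarith
  with "3.IH" show ?case
    by (simp add: coeff_eq_0)
qed auto

lemma degree_dickson: "m > 0 \<Longrightarrow> degree (dickson m) = m"
  by (metis coeff_dickson_self degree_dickson_le le_antisym le_degree zero_neq_one)

lemma poly_dickson_plus_inverse:
  fixes w :: "'a::field"
  assumes "w \<noteq> 0"
  shows "poly (dickson m) (w + inverse w) = w ^ m + inverse w ^ m"
  using assms by (induction m rule: dickson.induct) (auto simp: field_simps)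

lemma algebraic_int_plus_inverse_root_of_unity:
  fixes w :: complex
  assumes "w ^ m = 1" and "m > 0"
  shows "algebraic_int (w + inverse w)"
proof (rule algebraic_int_root)
  have "w \<noteq> 0"
    using assms by (metis power_0_left zero_neq_one not_gr0)
  then show "poly (dickson m) (w + inverse w) = 2"
    using assms by (simp add: poly_dickson_plus_inverse power_inverse)
qed (use \<open>m > 0\<close> in
    \<open>auto simp: degree_dickson coeff_dickson_self coeff_dickson_Ints\<close>)

lemma algebraic_int_two_cos:
  assumes "\<bar>cos (real \<tau> * \<theta>)\<bar> = 1" and "\<tau> > 0"
  shows "algebraic_int (complex_of_real (2 * cos \<theta>))"
proof -
  have "cos (real \<tau> * \<theta>) ^ 2 = \<bar>cos (real \<tau> * \<theta>)\<bar> ^ 2"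
    by simp
  also have "\<dots> = 1"
    by (simp only: assms(1) power_one)
  finally have "cos (real \<tau> * \<theta>) ^ 2 = 1" .
  then have "sin (real \<tau> * \<theta>) = 0"
    using sin_cos_squared_add[of "real \<tau> * \<theta>"] by simp
  then obtain i :: int where i: "real \<tau> * \<theta> = of_int i * pi"
    by (auto simp: sin_zero_iff_int2)
  have "real (2 * \<tau>) * \<theta> = 2 * pi * of_int i"
    using i by simp
  then have "cis \<theta> ^ (2 * \<tau>) = 1"
    by (simp only: DeMoivre cis_multiple_2pi Ints_of_int)
  then have "algebraic_int (cis \<theta> + inverse (cis \<theta>))"
    by (rule algebraic_int_plus_inverse_root_of_unity) (use assms(2) in simp)
  moreover have "cis \<theta> + inverse (cis \<theta>) = complex_of_real (2 * cos \<theta>)"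
    by (simp add: complex_eq_iff)
  ultimately show ?thesis
    by simp
qed

lemma cos_multiple_recurrence:
  "cos (real (Suc (Suc t)) * \<theta>) = 2 * cos \<theta> * cos (real (Suc t) * \<theta>) - cos (real t * \<theta>)"
proof -
  have "cos (real (Suc t) * \<theta> + \<theta>) + cos (real (Suc t) * \<theta> - \<theta>)
      = 2 * cos \<theta> * cos (real (Suc t) * \<theta>)"
    by (simp only: cos_add cos_diff) (simp add: algebra_simps)
  moreover have "real (Suc t) * \<theta> + \<theta> = real (Suc (Suc t)) * \<theta>"
    and "real (Suc t) * \<theta> - \<theta> = real t * \<theta>"
    by (simp_all add: algebra_simps)
  ultimately show ?thesis
    by simp
qed

lemma chebyshev_recurrence_solution:
  fixes p :: "nat \<Rightarrow> complex"
  assumes "p 0 = c" and "p 1 = c * of_real (cos \<theta>)"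
    and "\<And>t. p (Suc (Suc t)) = 2 * of_real (cos \<theta>) * p (Suc t) - p t"
  shows "p t = c * of_real (cos (real t * \<theta>))"
proof -
  have "p t = c * of_real (cos (real t * \<theta>))
      \<and> p (Suc t) = c * of_real (cos (real (Suc t) * \<theta>))"
  proof (induction t)
    case 0
    then show ?case
      using assms(1,2) by simp
  next
    case (Suc t)
    then have "p (Suc (Suc t))
        = c * of_real (2 * cos \<theta> * cos (real (Suc t) * \<theta>) - cos (real t * \<theta>))"
      by (simp add: assms(3) algebra_simps)
    then show ?case
      using Suc by (simp only: cos_multiple_recurrence)
  qed
  then show ?thesis ..
qed

locale circulant =
  fixes n :: nat and S :: "int set"
  assumes n_pos: "n > 0"
    and S_subset: "S \<subseteq> {0..<int n}"
    and S_symmetric: "\<And>s. s \<in> S \<Longrightarrow> (- s) mod int n \<in> S"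
    and S_nonempty: "S \<noteq> {}"
begin

abbreviation "V \<equiv> circ_V n"
abbreviation "adj \<equiv> circ_adj n S"
abbreviation "A \<equiv> arcs V adj"

definition nbrs :: "int \<Rightarrow> int set" where
  "nbrs x = {y \<in> V. adj x y}"

lemma finite_S: "finite S"
  using S_subset finite_atLeastLessThan_int finite_subset by blast

lemma card_S_pos: "card S > 0"
  using finite_S S_nonempty by (simp add: card_gt_0_iff)

lemma adj_sym: "adj u v \<longleftrightarrow> adj v u"
proof -
  have "adj v u" if "adj u v" for u v
  proof -
    have "(- ((v - u) mod int n)) mod int n \<in> S"
      using that S_symmetric by (simp add: circ_adj_def)
    then show ?thesis
      by (simp add: circ_adj_def mod_minus_eq)
  qed
  then show ?thesis
    by blast
qed

lemma sum_nbrs: "(\<Sum>y\<in>nbrs x. f y) = (\<Sum>s\<in>S. f ((x + s) mod int n))"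
proof (rule sum.reindex_bij_witness[symmetric,
    where j = "\<lambda>s. (x + s) mod int n" and i = "\<lambda>y. (y - x) mod int n"])
  fix s
  assume s: "s \<in> S"
  then have s_mod: "s mod int n = s"
    using S_subset by auto
  then show "((x + s) mod int n - x) mod int n = s"
    by (simp add: mod_diff_left_eq)
  show "(x + s) mod int n \<in> nbrs x"
    using s s_mod n_pos by (simp add: nbrs_def circ_V_def circ_adj_def mod_diff_left_eq)
next
  fix y
  assume y: "y \<in> nbrs x"
  then have "0 \<le> y" "y < int n"
    by (auto simp: nbrs_def circ_V_def)
  then show "(x + (y - x) mod int n) mod int n = y"
    by (simp add: mod_add_right_eq)
  show "(y - x) mod int n \<in> S"
    using y by (simp add: nbrs_def circ_adj_def)
qed simp

lemma card_nbrs: "card (nbrs x) = card S"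
  using sum_nbrs[where x = x and f = "\<lambda>_. 1 :: nat"] by simp

lemma finite_nbrs [simp]: "finite (nbrs x)"
  unfolding nbrs_def by (rule finite_subset[of _ V]) (auto simp: circ_V_def)

lemma arcs_eq_Sigma: "A = Sigma V nbrs"
  by (auto simp: arcs_def nbrs_def)

lemma finite_arcs: "finite A"
  unfolding arcs_eq_Sigma by (simp add: circ_V_def)

lemma sum_arcs: "(\<Sum>a\<in>A. F a) = (\<Sum>u\<in>V. \<Sum>v\<in>nbrs u. F (u, v))"
  unfolding arcs_eq_Sigma by (subst sum.Sigma) (auto simp: circ_V_def)

lemma swap_in_arcs: "(u, v) \<in> A \<Longrightarrow> (v, u) \<in> A"
  using adj_sym by (auto simp: arcs_def)

lemma sum_arcs_swap: "(\<Sum>a\<in>A. F a) = (\<Sum>a\<in>A. F (snd a, fst a))"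
  by (rule sum.reindex_bij_witness[where i = "\<lambda>a. (snd a, fst a)"
        and j = "\<lambda>a. (snd a, fst a)"])
     (auto intro: swap_in_arcs)

lemma bdry_eq: "bdry V adj x a = (if x = snd a then 1 / sqrt (card S) else 0)"
  by (simp add: bdry_def gdeg_def card_nbrs[unfolded nbrs_def])

lemma sqrt_card_S_squared:
  "complex_of_real (sqrt (card S)) * complex_of_real (sqrt (card S)) = of_nat (card S)"
  by (simp flip: of_real_mult)

definition incoming :: "(int \<times> int \<Rightarrow> complex) \<Rightarrow> int \<Rightarrow> complex" where
  "incoming g u = (\<Sum>c\<in>{c \<in> A. snd c = u}. g c)"

lemma d_mult_eq: "d_mult V adj g u = incoming g u / sqrt (card S)"
  unfolding d_mult_def bdry_eq incoming_def sum_divide_distrib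
  by (rule sum.mono_neutral_cong_right) (auto simp: finite_arcs)

lemma dstar_mult_eq:
  assumes "b \<in> A"
  shows "dstar_mult V adj F b = F (snd b) / sqrt (card S)"
proof -
  have "dstar_mult V adj F b = (\<Sum>x\<in>V. if x = snd b then F x / sqrt (card S) else 0)"
    unfolding dstar_mult_def bdry_eq by (rule sum.cong) auto
  then show ?thesis
    using assms by (cases b) (simp add: arcs_def circ_V_def)
qed

lemma walk_U_eq:
  assumes "a \<in> A"
  shows "walk_U V adj g a = 2 / card S * incoming g (fst a) - g (snd a, fst a)"
proof -
  have swap: "(snd a, fst a) \<in> A"
    using assms swap_in_arcs by (cases a) simp
  have "walk_U V adj g a
      = (\<Sum>b\<in>A. if b = (snd a, fst a)
            then 2 * dstar_mult V adj (d_mult V adj g) b - g b else 0)"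
    unfolding walk_U_def shift_mult_def by (rule sum.cong) auto
  also have "\<dots> = 2 * dstar_mult V adj (d_mult V adj g) (snd a, fst a) - g (snd a, fst a)"
    using swap finite_arcs by simp
  also have "\<dots> = 2 / card S * incoming g (fst a) - g (snd a, fst a)"
    using card_S_pos by (simp add: dstar_mult_eq[OF swap] d_mult_eq sqrt_card_S_squared)
  finally show ?thesis .
qed

definition zeta_pow :: "int \<Rightarrow> complex" where
  "zeta_pow z = cis (2 * pi * of_int z / n)"

lemma zeta_pow_add: "zeta_pow (x + y) = zeta_pow x * zeta_pow y"
  by (simp add: zeta_pow_def cis_mult add_divide_distrib distrib_left)

lemma zeta_pow_mod: "zeta_pow (z mod int n) = zeta_pow z"
proof -
  have "2 * pi * of_int (int n * (z div int n)) / n = 2 * pi * of_int (z div int n)"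
    using n_pos by (simp add: field_simps)
  then have "zeta_pow (int n * (z div int n)) = 1"
    by (simp add: zeta_pow_def)
  then show ?thesis
    by (metis div_mult_mod_eq mult.commute mult_1 zeta_pow_add)
qed

lemma norm_zeta_pow [simp]: "norm (zeta_pow z) = 1"
  by (simp add: zeta_pow_def)

lemma cnj_zeta_pow: "cnj (zeta_pow z) = zeta_pow (- z)"
  by (simp add: zeta_pow_def cis_cnj)

definition char_sum :: complex where
  "char_sum = (\<Sum>s\<in>S. zeta_pow s)"

lemma sum_nbrs_zeta_pow: "(\<Sum>v\<in>nbrs u. zeta_pow v) = zeta_pow u * char_sum"
  by (simp add: sum_nbrs zeta_pow_mod zeta_pow_add char_sum_def sum_distrib_left)

lemma char_sum_real: "char_sum = of_real (Re char_sum)"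
proof -
  have "cnj char_sum = (\<Sum>s\<in>S. zeta_pow ((- s) mod int n))"
    by (simp add: char_sum_def cnj_zeta_pow zeta_pow_mod)
  also have "\<dots> = char_sum"
    unfolding char_sum_def
    by (rule sum.reindex_bij_witness[where i = "\<lambda>s. (- s) mod int n"
          and j = "\<lambda>s. (- s) mod int n"])
       (use S_subset S_symmetric in \<open>auto simp: mod_minus_eq\<close>)
  finally show ?thesis
    by (metis Reals_cnj_iff of_real_Re)
qed

lemma norm_char_sum_le: "norm char_sum \<le> card S"
  unfolding char_sum_def using norm_sum[of zeta_pow S] by simp

definition head_proj :: "(int \<times> int \<Rightarrow> complex) \<Rightarrow> complex" where
  "head_proj g = (\<Sum>a\<in>A. zeta_pow (snd a) * g a)"

definition tail_proj :: "(int \<times> int \<Rightarrow> complex) \<Rightarrow> complex" where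
  "tail_proj g = (\<Sum>a\<in>A. zeta_pow (fst a) * g a)"

lemma sum_zeta_pow_incoming: "(\<Sum>u\<in>V. zeta_pow u * incoming g u) = head_proj g"
proof -
  have "(\<Sum>u\<in>V. zeta_pow u * incoming g u)
      = (\<Sum>u\<in>V. \<Sum>c\<in>{c \<in> A. snd c = u}. zeta_pow (snd c) * g c)"
    unfolding incoming_def sum_distrib_left by (intro sum.cong) auto
  also have "\<dots> = head_proj g"
    unfolding head_proj_def by (rule sum.group[OF finite_arcs]) (auto simp: arcs_def circ_V_def)
  finally show ?thesis .
qed

lemma head_proj_walk_U:
  "head_proj (walk_U V adj g) = 2 * char_sum / card S * head_proj g - tail_proj g"
proof -
  have "head_proj (walk_U V adj g)
      = 2 / card S * (\<Sum>a\<in>A. zeta_pow (snd a) * incoming g (fst a))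
        - (\<Sum>a\<in>A. zeta_pow (snd a) * g (snd a, fst a))"
    unfolding head_proj_def sum_distrib_left sum_subtractf[symmetric]
    by (rule sum.cong) (auto simp: walk_U_eq algebra_simps)
  also have "(\<Sum>a\<in>A. zeta_pow (snd a) * g (snd a, fst a)) = tail_proj g"
    unfolding tail_proj_def by (subst sum_arcs_swap) simp
  also have "(\<Sum>a\<in>A. zeta_pow (snd a) * incoming g (fst a))
      = (\<Sum>u\<in>V. (\<Sum>v\<in>nbrs u. zeta_pow v) * incoming g u)"
    by (simp add: sum_arcs sum_distrib_right)
  also have "\<dots> = char_sum * head_proj g"
    by (simp add: sum_nbrs_zeta_pow sum_distrib_left mult_ac flip: sum_zeta_pow_incoming)
  finally show ?thesis
    by simp
qed

lemma tail_proj_walk_U: "tail_proj (walk_U V adj g) = head_proj g"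
proof -
  have "tail_proj (walk_U V adj g)
      = 2 / card S * (\<Sum>a\<in>A. zeta_pow (fst a) * incoming g (fst a))
        - (\<Sum>a\<in>A. zeta_pow (fst a) * g (snd a, fst a))"
    unfolding tail_proj_def sum_distrib_left sum_subtractf[symmetric]
    by (rule sum.cong) (auto simp: walk_U_eq algebra_simps)
  also have "(\<Sum>a\<in>A. zeta_pow (fst a) * g (snd a, fst a)) = head_proj g"
    unfolding head_proj_def by (subst sum_arcs_swap) simp
  also have "(\<Sum>a\<in>A. zeta_pow (fst a) * incoming g (fst a)) = card S * head_proj g"
    by (simp add: sum_arcs card_nbrs sum_distrib_left flip: sum_zeta_pow_incoming)
  finally show ?thesis
    using card_S_pos by simp
qed

lemma sum_arcs_into:
  assumes "x \<in> V"
  shows "(\<Sum>a\<in>A. if snd a = x then F (fst a) else 0) = (\<Sum>v\<in>nbrs x. F v)"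
proof -
  have "(\<Sum>a\<in>A. if snd a = x then F (fst a) else 0)
      = (\<Sum>a\<in>A. if fst a = x then F (snd a) else 0)"
    using sum_arcs_swap[of "\<lambda>a. if snd a = x then F (fst a) else 0"] by (simp cong: if_cong)
  also have "\<dots> = (\<Sum>u\<in>V. if u = x then (\<Sum>v\<in>nbrs u. F v) else 0)"
    unfolding sum_arcs by (rule sum.cong) auto
  also have "\<dots> = (\<Sum>v\<in>nbrs x. F v)"
    using assms by (simp add: circ_V_def)
  finally show ?thesis .
qed

lemma head_proj_dstar_unit_vec:
  assumes "x \<in> V"
  shows "head_proj (dstar_mult V adj (unit_vec x)) = card S / sqrt (card S) * zeta_pow x"
proof -
  have "head_proj (dstar_mult V adj (unit_vec x))
      = (\<Sum>a\<in>A. if snd a = x then zeta_pow x / sqrt (card S) else 0)"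
    unfolding head_proj_def by (rule sum.cong) (auto simp: dstar_mult_eq unit_vec_def)
  also have "\<dots> = card S * (zeta_pow x / sqrt (card S))"
    using sum_arcs_into[OF assms, of "\<lambda>_. zeta_pow x / sqrt (card S)"]
    by (simp add: card_nbrs)
  finally show ?thesis
    by simp
qed

lemma tail_proj_dstar_unit_vec:
  assumes "x \<in> V"
  shows "tail_proj (dstar_mult V adj (unit_vec x)) = char_sum / sqrt (card S) * zeta_pow x"
proof -
  have "tail_proj (dstar_mult V adj (unit_vec x))
      = (\<Sum>a\<in>A. if snd a = x then zeta_pow (fst a) / sqrt (card S) else 0)"
    unfolding tail_proj_def by (rule sum.cong) (auto simp: dstar_mult_eq unit_vec_def)
  also have "\<dots> = (\<Sum>v\<in>nbrs x. zeta_pow v) / sqrt (card S)"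
    using sum_arcs_into[OF assms, of "\<lambda>v. zeta_pow v / sqrt (card S)"]
    by (simp add: sum_divide_distrib)
  finally show ?thesis
    by (simp add: sum_nbrs_zeta_pow)
qed

definition walk_angle :: real where
  "walk_angle = arccos (Re char_sum / card S)"

lemma cos_walk_angle: "complex_of_real (cos walk_angle) = char_sum / card S"
proof -
  have "\<bar>Re char_sum\<bar> \<le> card S"
    using abs_Re_le_cmod norm_char_sum_le by (rule order.trans)
  then have "- 1 \<le> Re char_sum / card S" "Re char_sum / card S \<le> 1"
    using card_S_pos by (simp_all add: field_simps abs_le_iff)
  then have "cos walk_angle = Re char_sum / card S"
    by (simp add: walk_angle_def)
  then have "complex_of_real (cos walk_angle) = of_real (Re char_sum) / card S"
    by simp
  then show ?thesis
    by (simp flip: char_sum_real)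
qed

lemma head_proj_walk_iterate:
  assumes "x \<in> V"
  shows "head_proj ((walk_U V adj ^^ t) (dstar_mult V adj (unit_vec x)))
    = card S / sqrt (card S) * zeta_pow x * cos (real t * walk_angle)"
proof -
  define g where "g t = (walk_U V adj ^^ t) (dstar_mult V adj (unit_vec x))" for t
  define c where "c = card S / sqrt (card S) * zeta_pow x"
  have "head_proj (g 0) = c"
    using assms by (simp add: g_def c_def head_proj_dstar_unit_vec)
  moreover have "head_proj (g 1) = c * cos walk_angle"
  proof -
    have "c / card S = zeta_pow x / sqrt (card S)"
      using card_S_pos by (simp add: c_def)
    then have "head_proj (g 1) = 2 * char_sum * (c / card S) - char_sum * (c / card S)"
      using assms
      by (simp add: g_def head_proj_walk_U head_proj_dstar_unit_vec tail_proj_dstar_unit_vec)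
    then show ?thesis
      by (simp add: cos_walk_angle)
  qed
  moreover have "head_proj (g (Suc (Suc t)))
      = 2 * complex_of_real (cos walk_angle) * head_proj (g (Suc t)) - head_proj (g t)" for t
    by (simp add: g_def head_proj_walk_U tail_proj_walk_U cos_walk_angle)
  ultimately have "head_proj (g t) = c * cos (real t * walk_angle)"
    by (rule chebyshev_recurrence_solution)
  then show ?thesis
    by (simp add: g_def c_def)
qed

theorem algebraic_int_char_sum_if_PST:
  assumes "has_PST V adj"
  shows "algebraic_int (2 * char_sum / card S)"
proof -
  obtain x y \<tau> \<gamma> where "x \<in> V" "y \<in> V" "\<tau> \<ge> 1" "norm \<gamma> = 1"
    and pst: "\<forall>a\<in>A. (walk_U V adj ^^ \<tau>) (dstar_mult V adj (unit_vec x)) a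
                      = \<gamma> * dstar_mult V adj (unit_vec y) a"
    using assms unfolding has_PST_def by blast
  have "head_proj ((walk_U V adj ^^ \<tau>) (dstar_mult V adj (unit_vec x)))
      = \<gamma> * head_proj (dstar_mult V adj (unit_vec y))"
    unfolding head_proj_def sum_distrib_left
  proof (rule sum.cong)
    fix a
    assume "a \<in> A"
    then show "zeta_pow (snd a) * (walk_U V adj ^^ \<tau>) (dstar_mult V adj (unit_vec x)) a
        = \<gamma> * (zeta_pow (snd a) * dstar_mult V adj (unit_vec y) a)"
      using pst by (simp add: mult.left_commute)
  qed simp
  then have "card S / sqrt (card S) * zeta_pow x * cos (real \<tau> * walk_angle)
      = \<gamma> * (card S / sqrt (card S) * zeta_pow y)"
    using \<open>x \<in> V\<close> \<open>y \<in> V\<close>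
    by (simp add: head_proj_walk_iterate head_proj_dstar_unit_vec)
  then have "norm (card S / sqrt (card S) * zeta_pow x * cos (real \<tau> * walk_angle))
      = norm (\<gamma> * (card S / sqrt (card S) * zeta_pow y))"
    by (rule arg_cong)
  then have "card S / sqrt (card S) * \<bar>cos (real \<tau> * walk_angle)\<bar> = card S / sqrt (card S)"
    using \<open>norm \<gamma> = 1\<close> by (simp add: norm_mult norm_divide)
  then have "\<bar>cos (real \<tau> * walk_angle)\<bar> = 1"
    using card_S_pos by simp
  then have "algebraic_int (complex_of_real (2 * cos walk_angle))"
    by (rule algebraic_int_two_cos) (use \<open>\<tau> \<ge> 1\<close> in simp)
  then show ?thesis
    by (simp add: cos_walk_angle)
qed

end

theorem lemma9p2:
  fixes l :: nat and a b :: int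
  defines "S \<equiv> {a mod int (2*l), (-a) mod int (2*l), b mod int (2*l), (-b) mod int (2*l)}"
  assumes "l \<ge> 1"
    and "0 \<notin> S"
    and "card S = 4"
    and "has_PST (circ_V (2*l)) (circ_adj (2*l) S)"
  shows "algebraic_int ((cis (2*pi*a/(2*l)) + cis (2*pi*(-a)/(2*l))
                        + cis (2*pi*b/(2*l)) + cis (2*pi*(-b)/(2*l))) / 2)"
proof -
  interpret circulant "2 * l" S
  proof
    show "2 * l > 0"
      using \<open>l \<ge> 1\<close> by simp
    show "S \<subseteq> {0..<int (2 * l)}"
      using \<open>l \<ge> 1\<close> by (auto simp: S_def)
    show "(- s) mod int (2 * l) \<in> S" if "s \<in> S" for s
      using that by (auto simp: S_def mod_minus_eq)
    show "S \<noteq> {}"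
      by (simp add: S_def)
  qed
  have zeta_pow_mod_2l: "zeta_pow (z mod (2 * int l)) = zeta_pow z" for z
    using zeta_pow_mod[of z] by simp
  have "char_sum = zeta_pow a + zeta_pow (- a) + zeta_pow b + zeta_pow (- b)"
    using \<open>card S = 4\<close> unfolding char_sum_def
    by (auto simp: S_def zeta_pow_mod_2l card_insert_if add.assoc split: if_splits)
  moreover have "algebraic_int (char_sum / 2)"
    using algebraic_int_char_sum_if_PST \<open>has_PST V adj\<close> \<open>card S = 4\<close>
    by (simp add: field_simps)
  ultimately show ?thesis
    by (simp add: zeta_pow_def)
qed

end
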